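(* Let $S$ be a T2R semigroup, with $S=S_0\cup S_1$ as in the definition, and let $b\in S$ be an element such that $|J_b|=2$ and $I(b)=\{0\}$. Then for every $x,y\in S^1$, either $0\notin xJ_by$ or $xJ_by=\{0\}$. Moreover, $J_bS_0=S_0J_b=\{0\}$, and either $S_1J_b=\{0\}$ or $S_1J_b=J_b$.
   Context: A semigroup $S$ is a $\Delta$-semigroup if the lattice of all congruences of $S$ is a chain with respect to inclusion. A semigroup $N$ with zero $0$ is nil if every element has some power equal to $0$; non-trivial means having more than one element. A T2R semigroup is a $\Delta$-semigroup $S$ which is the disjoint union of a non-trivial nil ideal $S_0$ (with zero $0$, which is then the zero of $S$) and a subsemigroup $S_1$ which is a two-element right zero semigroup (i.e. $S_1=\{u,v\}$ with $xy=y$ for $x,y\in S_1$). $S^1$ denotes $S$ with an identity $1$ adjoined. For $a\in S$: $J(a)=S^1aS^1$, $J_a=\{s\in S:J(s)=J(a)\}$, $I(a)=J(a)\setminus J_a$. Products of elements with sets are taken elementwise, e.g. $xAy=\{xay:a\in A\}$, $AB=\{ab: a\in A, b\in B\}$. *)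

theory Defs
  imports Main
begin

definition semigroup_on :: "'a set \<Rightarrow> ('a \<Rightarrow> 'a \<Rightarrow> 'a) \<Rightarrow> bool" where
  "semigroup_on S m \<longleftrightarrow> (\<forall>x\<in>S. \<forall>y\<in>S. m x y \<in> S) \<and>
     (\<forall>x\<in>S. \<forall>y\<in>S. \<forall>z\<in>S. m (m x y) z = m x (m y z))"

definition congruence_on :: "'a set \<Rightarrow> ('a \<Rightarrow> 'a \<Rightarrow> 'a) \<Rightarrow> 'a rel \<Rightarrow> bool" where
  "congruence_on S m r \<longleftrightarrow> equiv S r \<and>
     (\<forall>a\<in>S. \<forall>b\<in>S. \<forall>c\<in>S. (a, b) \<in> r \<longrightarrow> (m c a, m c b) \<in> r \<and> (m a c, m b c) \<in> r)"

definition delta_semigroup :: "'a set \<Rightarrow> ('a \<Rightarrow> 'a \<Rightarrow> 'a) \<Rightarrow> bool" where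
  "delta_semigroup S m \<longleftrightarrow> semigroup_on S m \<and>
     (\<forall>r1 r2. congruence_on S m r1 \<longrightarrow> congruence_on S m r2 \<longrightarrow> r1 \<subseteq> r2 \<or> r2 \<subseteq> r1)"

text \<open>Positive powers: spow m a n = a^(n+1).\<close>
fun spow :: "('a \<Rightarrow> 'a \<Rightarrow> 'a) \<Rightarrow> 'a \<Rightarrow> nat \<Rightarrow> 'a" where
  "spow m a 0 = a"
| "spow m a (Suc n) = m (spow m a n) a"

definition T2R :: "'a set \<Rightarrow> ('a \<Rightarrow> 'a \<Rightarrow> 'a) \<Rightarrow> 'a set \<Rightarrow> 'a set \<Rightarrow> 'a \<Rightarrow> bool" where
  "T2R S m S0 S1 z \<longleftrightarrow> delta_semigroup S m \<and>
     S = S0 \<union> S1 \<and> S0 \<inter> S1 = {} \<and>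
     (\<forall>s\<in>S. \<forall>a\<in>S0. m s a \<in> S0 \<and> m a s \<in> S0) \<and>
     z \<in> S0 \<and> (\<forall>a\<in>S0. m z a = z \<and> m a z = z) \<and>
     (\<forall>a\<in>S0. \<exists>n. spow m a n = z) \<and>
     (\<exists>a\<in>S0. a \<noteq> z) \<and>
     (\<exists>u v. u \<noteq> v \<and> S1 = {u, v}) \<and>
     (\<forall>x\<in>S1. \<forall>y\<in>S1. m x y = y)"

text \<open>S^1 is modelled by 'a option, None being the adjoined identity.\<close>
definition S1adj :: "'a set \<Rightarrow> 'a option set" where
  "S1adj S = insert None (Some ` S)"

fun lmul :: "('a \<Rightarrow> 'a \<Rightarrow> 'a) \<Rightarrow> 'a option \<Rightarrow> 'a \<Rightarrow> 'a" where
  "lmul m None a = a"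
| "lmul m (Some x) a = m x a"

fun rmul :: "('a \<Rightarrow> 'a \<Rightarrow> 'a) \<Rightarrow> 'a \<Rightarrow> 'a option \<Rightarrow> 'a" where
  "rmul m a None = a"
| "rmul m a (Some y) = m a y"

definition triple_prod :: "('a \<Rightarrow> 'a \<Rightarrow> 'a) \<Rightarrow> 'a option \<Rightarrow> 'a set \<Rightarrow> 'a option \<Rightarrow> 'a set" where
  "triple_prod m x A y = {rmul m (lmul m x a) y | a. a \<in> A}"

definition set_prod :: "('a \<Rightarrow> 'a \<Rightarrow> 'a) \<Rightarrow> 'a set \<Rightarrow> 'a set \<Rightarrow> 'a set" where
  "set_prod m A B = {m a b | a b. a \<in> A \<and> b \<in> B}"

definition Jideal :: "'a set \<Rightarrow> ('a \<Rightarrow> 'a \<Rightarrow> 'a) \<Rightarrow> 'a \<Rightarrow> 'a set" where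
  "Jideal S m a = {rmul m (lmul m x a) y | x y. x \<in> S1adj S \<and> y \<in> S1adj S}"

definition Jclass :: "'a set \<Rightarrow> ('a \<Rightarrow> 'a \<Rightarrow> 'a) \<Rightarrow> 'a \<Rightarrow> 'a set" where
  "Jclass S m a = {s \<in> S. Jideal S m s = Jideal S m a}"

definition Iideal :: "'a set \<Rightarrow> ('a \<Rightarrow> 'a \<Rightarrow> 'a) \<Rightarrow> 'a \<Rightarrow> 'a set" where
  "Iideal S m a = Jideal S m a - Jclass S m a"

end

theory Submission
  imports Defs
begin

text \<open>
  Everything happens inside the J-class K = J_b, which together with the zero is closed under
  multiplication from S^1 on both sides, and any two of whose members divide each other.
  A product k a with k \<in> K and a \<in> S0 cannot lie in K: otherwise k = (p k)(a q) with a q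
  nilpotent, and iterating this factorisation drives k to 0. Hence S0 annihilates K from both
  sides, so all multipliers relating members of K lie in S1^1, where every element is
  idempotent and x p x = p x. So if x t y \<noteq> 0 for some t \<in> K, then any s \<in> K has the
  form s = p (x t y) q, whence (x s y) q = s and x s y \<noteq> 0. Likewise
  g s \<noteq> 0 for one g \<in> S1 makes every element of S1 act as the identity on K.
\<close>

locale semigroup_carrier =
  fixes S :: "'a set" and m :: "'a \<Rightarrow> 'a \<Rightarrow> 'a"
  assumes semigroup: "semigroup_on S m"
begin

lemma closed: "x \<in> S \<Longrightarrow> y \<in> S \<Longrightarrow> m x y \<in> S"
  using semigroup by (simp add: semigroup_on_def)

lemma assoc: "x \<in> S \<Longrightarrow> y \<in> S \<Longrightarrow> w \<in> S \<Longrightarrow> m (m x y) w = m x (m y w)"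
  using semigroup by (simp add: semigroup_on_def)

lemma lmul_in: "x \<in> S1adj S \<Longrightarrow> w \<in> S \<Longrightarrow> lmul m x w \<in> S"
  by (auto simp: S1adj_def closed)

lemma rmul_in: "y \<in> S1adj S \<Longrightarrow> w \<in> S \<Longrightarrow> rmul m w y \<in> S"
  by (auto simp: S1adj_def closed)

lemma self_in_Jideal: "s \<in> S \<Longrightarrow> s \<in> Jideal S m s"
  unfolding Jideal_def S1adj_def by force

lemma spow_in: "g \<in> S \<Longrightarrow> spow m g n \<in> S"
  by (induction n) (auto simp: closed)

lemma spow_Suc_left: "g \<in> S \<Longrightarrow> m g (spow m g n) = spow m g (Suc n)"
proof (induction n)
  case (Suc n)
  then show ?case by (simp add: assoc[symmetric] spow_in)
qed simp

end

locale semigroup_zero = semigroup_carrier +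
  fixes z :: 'a
  assumes zero_in: "z \<in> S"
    and zero_absorbs: "s \<in> S \<Longrightarrow> m z s = z \<and> m s z = z"
begin

lemma rmul_zero: "y \<in> S1adj S \<Longrightarrow> rmul m z y = z"
  using zero_absorbs by (auto simp: S1adj_def)

lemma right_stable_nilpotent_eq_zero:
  assumes s: "s \<in> S" and g: "g \<in> S" and p: "p \<in> S1adj S"
    and stable: "s = m (lmul m p s) g" and nil: "spow m g n = z"
  shows "s = z"
proof -
  have "\<exists>w\<in>S. s = m w (spow m g k)" for k
  proof (induction k)
    case 0
    show ?case using stable lmul_in[OF p s] by auto
  next
    case (Suc k)
    then obtain w where w: "w \<in> S" "s = m w (spow m g k)" by blast
    have "s = m (m (lmul m p w) (spow m g k)) g"
      using stable w p spow_in[OF g] by (subst (asm) w(2)) (auto simp: S1adj_def assoc)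
    also have "\<dots> = m (lmul m p w) (spow m g (Suc k))"
      using assoc[OF lmul_in[OF p w(1)] spow_in[OF g] g] by simp
    finally show ?case using lmul_in[OF p w(1)] by blast
  qed
  then obtain w where "w \<in> S" "s = m w z" using nil by metis
  then show ?thesis using zero_absorbs by simp
qed

lemma left_stable_nilpotent_eq_zero:
  assumes s: "s \<in> S" and g: "g \<in> S" and q: "q \<in> S1adj S"
    and stable: "s = m g (rmul m s q)" and nil: "spow m g n = z"
  shows "s = z"
proof -
  have "\<exists>w\<in>S. s = m (spow m g k) w" for k
  proof (induction k)
    case 0
    show ?case using stable rmul_in[OF q s] by auto
  next
    case (Suc k)
    then obtain w where w: "w \<in> S" "s = m (spow m g k) w" by blast
    have "s = m g (m (spow m g k) (rmul m w q))"
      using stable w q spow_in[OF g] by (subst (asm) w(2)) (auto simp: S1adj_def assoc)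
    also have "\<dots> = m (spow m g (Suc k)) (rmul m w q)"
      using assoc[OF g spow_in[OF g] rmul_in[OF q w(1)]] spow_Suc_left[OF g] by simp
    finally show ?case using rmul_in[OF q w(1)] by blast
  qed
  then obtain w where "w \<in> S" "s = m z w" using nil by metis
  then show ?thesis using zero_absorbs by simp
qed

end

text \<open>
  The part of the T2R structure the argument uses: neither the chain condition on congruences
  nor the sizes of S0 and S1 play any role.
\<close>

locale nil_right_zero_extension = semigroup_carrier +
  fixes S0 S1 :: "'a set" and z :: 'a
  assumes S_eq: "S = S0 \<union> S1"
    and ideal: "s \<in> S \<Longrightarrow> a \<in> S0 \<Longrightarrow> m s a \<in> S0 \<and> m a s \<in> S0"
    and zero_in_S0: "z \<in> S0"
    and zero_S0: "a \<in> S0 \<Longrightarrow> m z a = z \<and> m a z = z"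
    and nil: "a \<in> S0 \<Longrightarrow> \<exists>n. spow m a n = z"
    and right_zero: "x \<in> S1 \<Longrightarrow> y \<in> S1 \<Longrightarrow> m x y = y"
begin

lemma zero_absorbs_S:
  assumes s: "s \<in> S" shows "m z s = z \<and> m s z = z"
proof -
  have zS: "z \<in> S" using S_eq zero_in_S0 by auto
  have zz: "m z z = z" using zero_S0 zero_in_S0 by auto
  have "m z s \<in> S0" "m s z \<in> S0" using ideal[OF s zero_in_S0] by auto
  then have "m z (m z s) = z" "m (m s z) z = z" using zero_S0 by auto
  then show ?thesis using assoc[OF zS zS s] assoc[OF s zS zS] zz by simp
qed

sublocale semigroup_zero S m z
  using S_eq zero_in_S0 zero_absorbs_S by unfold_locales auto

lemma S1adj_cases: "x \<in> S1adj S \<Longrightarrow> x \<in> S1adj S1 \<or> (\<exists>a\<in>S0. x = Some a)"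
  using S_eq by (auto simp: S1adj_def)

lemma S1adj_S1_subset: "S1adj S1 \<subseteq> S1adj S"
  using S_eq by (auto simp: S1adj_def)

lemma S1_in: "g \<in> S1 \<Longrightarrow> g \<in> S"
  using S_eq by auto

lemma right_zero_left: "g \<in> S1 \<Longrightarrow> h \<in> S1 \<Longrightarrow> w \<in> S \<Longrightarrow> m g (m h w) = m h w"
  by (simp add: assoc[symmetric] S1_in right_zero)

text \<open>In S1^1 every element is idempotent and x p x = p x.\<close>

lemma S1adj_S1_absorb:
  assumes "x \<in> S1adj S1" "y \<in> S1adj S1" "p \<in> S1adj S1" "q \<in> S1adj S1" "t \<in> S"
  shows "rmul m (rmul m (lmul m x (rmul m (lmul m p (rmul m (lmul m x t) y)) q)) y) q
       = rmul m (lmul m p (rmul m (lmul m x t) y)) q"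
  using assms by (auto simp: S1adj_def assoc closed S1_in right_zero right_zero_left)

end

lemma T2R_nil_right_zero_extension:
  "T2R S m S0 S1 z \<Longrightarrow> nil_right_zero_extension S m S0 S1 z"
  unfolding T2R_def delta_semigroup_def nil_right_zero_extension_def
    nil_right_zero_extension_axioms_def semigroup_carrier_def
  by blast

locale nil_right_zero_extension_Jclass = nil_right_zero_extension +
  fixes b :: 'a
  assumes b_in: "b \<in> S"
    and Iideal_b: "Iideal S m b = {z}"
begin

abbreviation K :: "'a set" where "K \<equiv> Jclass S m b"

lemma b_in_K: "b \<in> K"
  using b_in by (simp add: Jclass_def)

lemma JclassD: "s \<in> K \<Longrightarrow> s \<in> S \<and> Jideal S m s = Jideal S m b"
  by (simp add: Jclass_def)

lemma zero_notin_Jclass: "z \<notin> K"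
  using Iideal_b by (auto simp: Iideal_def)

lemma Jclass_product_in:
  assumes s: "s \<in> K" and x: "x \<in> S1adj S" and y: "y \<in> S1adj S"
  shows "rmul m (lmul m x s) y \<in> insert z K"
proof -
  have "rmul m (lmul m x s) y \<in> Jideal S m b"
    using JclassD[OF s] x y unfolding Jideal_def by blast
  then show ?thesis using Iideal_b by (auto simp: Iideal_def)
qed

lemma Jclass_divides:
  assumes "s \<in> K" "t \<in> K"
  shows "\<exists>p\<in>S1adj S. \<exists>q\<in>S1adj S. s = rmul m (lmul m p t) q"
proof -
  have "s \<in> Jideal S m t" using self_in_Jideal JclassD assms by metis
  then show ?thesis unfolding Jideal_def by blast
qed

lemma Jclass_times_S0:
  assumes s: "s \<in> K" and a: "a \<in> S0"
  shows "m s a = z"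
proof (rule ccontr)
  assume "m s a \<noteq> z"
  have sS: "s \<in> S" and aS: "a \<in> S" using JclassD[OF s] a S_eq by auto
  have "m s a \<in> insert z K"
    using Jclass_product_in[OF s, of None "Some a"] aS by (simp add: S1adj_def)
  with \<open>m s a \<noteq> z\<close> have "m s a \<in> K" by simp
  then obtain p q where p: "p \<in> S1adj S" and q: "q \<in> S1adj S"
    and s_eq: "s = rmul m (lmul m p (m s a)) q"
    using Jclass_divides[OF s] by blast
  have g: "rmul m a q \<in> S0" using q a ideal by (auto simp: S1adj_def)
  then obtain n where "spow m (rmul m a q) n = z" using nil by blast
  moreover have "rmul m (lmul m p (m s a)) q = m (lmul m p s) (rmul m a q)"
    using p q sS aS by (auto simp: S1adj_def assoc closed)
  ultimately have "s = z"
    using right_stable_nilpotent_eq_zero[OF sS _ p] s_eq g S_eq by auto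
  then show False using s zero_notin_Jclass by simp
qed

lemma S0_times_Jclass:
  assumes s: "s \<in> K" and a: "a \<in> S0"
  shows "m a s = z"
proof (rule ccontr)
  assume "m a s \<noteq> z"
  have sS: "s \<in> S" and aS: "a \<in> S" using JclassD[OF s] a S_eq by auto
  have "m a s \<in> insert z K"
    using Jclass_product_in[OF s, of "Some a" None] aS by (simp add: S1adj_def)
  with \<open>m a s \<noteq> z\<close> have "m a s \<in> K" by simp
  then obtain p q where p: "p \<in> S1adj S" and q: "q \<in> S1adj S"
    and s_eq: "s = rmul m (lmul m p (m a s)) q"
    using Jclass_divides[OF s] by blast
  have g: "lmul m p a \<in> S0" using p a ideal by (auto simp: S1adj_def)
  then obtain n where "spow m (lmul m p a) n = z" using nil by blast
  moreover have "rmul m (lmul m p (m a s)) q = m (lmul m p a) (rmul m s q)"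
    using p q sS aS by (auto simp: S1adj_def assoc closed)
  ultimately have "s = z"
    using left_stable_nilpotent_eq_zero[OF sS _ q] s_eq g S_eq by auto
  then show False using s zero_notin_Jclass by simp
qed

lemma nonzero_product_multipliers:
  assumes s: "s \<in> K" and x: "x \<in> S1adj S" and y: "y \<in> S1adj S"
    and nz: "rmul m (lmul m x s) y \<noteq> z"
  shows "x \<in> S1adj S1 \<and> y \<in> S1adj S1"
proof -
  have "x \<notin> Some ` S0"
    using S0_times_Jclass[OF s] rmul_zero[OF y] nz by auto
  moreover have "lmul m x s \<in> insert z K"
    using Jclass_product_in[OF s x, of None] by (simp add: S1adj_def)
  then have "y \<notin> Some ` S0"
    using Jclass_times_S0 zero_S0 nz by auto
  ultimately show ?thesis using S1adj_cases[OF x] S1adj_cases[OF y] by auto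
qed

lemma Jclass_divides_S1:
  assumes s: "s \<in> K" and t: "t \<in> K"
  shows "\<exists>p\<in>S1adj S1. \<exists>q\<in>S1adj S1. s = rmul m (lmul m p t) q"
proof -
  obtain p q where "p \<in> S1adj S" "q \<in> S1adj S" and s_eq: "s = rmul m (lmul m p t) q"
    using Jclass_divides[OF s t] by blast
  moreover have "s \<noteq> z" using s zero_notin_Jclass by auto
  ultimately show ?thesis using nonzero_product_multipliers[OF t] by metis
qed

lemma Jclass_zero_product_uniform:
  assumes s: "s \<in> K" and t: "t \<in> K" and x: "x \<in> S1adj S" and y: "y \<in> S1adj S"
    and nz: "rmul m (lmul m x t) y \<noteq> z"
  shows "rmul m (lmul m x s) y \<noteq> z"
proof
  assume xsy: "rmul m (lmul m x s) y = z"
  have xy: "x \<in> S1adj S1" "y \<in> S1adj S1"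
    using nonzero_product_multipliers[OF t x y nz] by auto
  have "rmul m (lmul m x t) y \<in> K" using Jclass_product_in[OF t x y] nz by auto
  then obtain p q where p: "p \<in> S1adj S1" and q: "q \<in> S1adj S1"
    and s_eq: "s = rmul m (lmul m p (rmul m (lmul m x t) y)) q"
    using Jclass_divides_S1[OF s] by blast
  have "rmul m (rmul m (lmul m x s) y) q = s"
    using S1adj_S1_absorb[OF xy p q] JclassD[OF t] s_eq by simp
  then have "s = z" using xsy rmul_zero q S1adj_S1_subset by auto
  then show False using s zero_notin_Jclass by simp
qed

lemma S1_fixes_Jclass_member:
  assumes g: "g \<in> S1" and s: "s \<in> K" and nz: "m g s \<noteq> z"
  shows "\<forall>h\<in>S1. m h s = s"
proof -
  have sS: "s \<in> S" using JclassD[OF s] by simp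
  have gS: "g \<in> S" using g S_eq by auto
  have "m g s \<in> K"
    using Jclass_product_in[OF s, of "Some g" None] gS nz by (simp add: S1adj_def)
  then obtain p q where p: "p \<in> S1adj S1" and q: "q \<in> S1adj S"
    and s_eq: "s = rmul m (lmul m p (m g s)) q"
    using Jclass_divides_S1[OF s] S1adj_S1_subset by blast
  have "lmul m p (m g s) = m g s"
    using p g sS S_eq by (auto simp: S1adj_def assoc[symmetric] right_zero)
  then have s_g: "s = m g (rmul m s q)" using s_eq q gS sS by (auto simp: S1adj_def assoc)
  show ?thesis
  proof
    fix h assume h: "h \<in> S1"
    have "m h s = m (m h g) (rmul m s q)"
      using h S_eq gS rmul_in[OF q sS] by (subst s_g) (simp add: assoc)
    then show "m h s = s" using right_zero[OF h g] s_g by simp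
  qed
qed

lemma S1_fixes_Jclass:
  assumes s: "s \<in> K" and fixes_s: "\<forall>h\<in>S1. m h s = s" and h: "h \<in> S1" and s': "s' \<in> K"
  shows "m h s' = s'"
proof -
  have sS: "s \<in> S" using JclassD[OF s] by simp
  obtain p q where p: "p \<in> S1adj S1" and q: "q \<in> S1adj S"
    and s'_eq: "s' = rmul m (lmul m p s) q"
    using Jclass_divides_S1[OF s' s] S1adj_S1_subset by blast
  have "lmul m p s = s" using p fixes_s by (auto simp: S1adj_def)
  then have "s' = rmul m s q" using s'_eq by simp
  moreover have "m h (rmul m s q) = rmul m (m h s) q"
    using q sS h S_eq by (auto simp: S1adj_def assoc)
  ultimately show ?thesis using fixes_s h by simp
qed

end

theorem proposition2:
  fixes S S0 S1 :: "'a set" and m :: "'a \<Rightarrow> 'a \<Rightarrow> 'a" and z b :: 'a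
  assumes "T2R S m S0 S1 z"
    and "b \<in> S"
    and "card (Jclass S m b) = 2"
    and "Iideal S m b = {z}"
  shows "(\<forall>x\<in>S1adj S. \<forall>y\<in>S1adj S.
            z \<notin> triple_prod m x (Jclass S m b) y \<or> triple_prod m x (Jclass S m b) y = {z})
       \<and> set_prod m (Jclass S m b) S0 = {z}
       \<and> set_prod m S0 (Jclass S m b) = {z}
       \<and> (set_prod m S1 (Jclass S m b) = {z} \<or> set_prod m S1 (Jclass S m b) = Jclass S m b)"
proof -
  interpret nil_right_zero_extension_Jclass S m S0 S1 z b
    using assms T2R_nil_right_zero_extension
    by (simp add: nil_right_zero_extension_Jclass_def nil_right_zero_extension_Jclass_axioms_def)
  have "S1 \<noteq> {}" using assms(1) by (auto simp: T2R_def)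
  have "triple_prod m x K y = {z}" if "x \<in> S1adj S" "y \<in> S1adj S" "z \<in> triple_prod m x K y" for x y
    using Jclass_zero_product_uniform[OF _ _ that(1,2)] that(3) b_in_K
    unfolding triple_prod_def by blast
  moreover have "set_prod m K S0 = {z}" "set_prod m S0 K = {z}"
    using Jclass_times_S0 S0_times_Jclass b_in_K zero_in_S0 unfolding set_prod_def by fastforce+
  moreover have "set_prod m S1 K = {z} \<or> set_prod m S1 K = K"
  proof (cases "\<exists>g\<in>S1. \<exists>s\<in>K. m g s \<noteq> z")
    case True
    then have "\<forall>h\<in>S1. \<forall>s\<in>K. m h s = s"
      using S1_fixes_Jclass_member S1_fixes_Jclass by metis
    with \<open>S1 \<noteq> {}\<close> have "set_prod m S1 K = K" unfolding set_prod_def by force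
    then show ?thesis ..
  next
    case False
    then have "set_prod m S1 K = {z}" unfolding set_prod_def
      using b_in_K \<open>S1 \<noteq> {}\<close> by fastforce
    then show ?thesis ..
  qed
  ultimately show ?thesis by blast
qed

end
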